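(* Let $N_1,N_2,N_3\ge0$ be integers. The Calderon transformation $C$ maps the extremal points and extremal faces of $\sigma(N_1,N_2,N_3)$ and of $Q(N_1,N_2,N_3)$ onto the extremal points and extremal faces of $\sigma_P(2N_1,2N_2,2N_3)$ and of $Q_P(2N_1,2N_2,2N_3)$, respectively.
   Context: For integers $N_1,N_2,N_3\ge0$, $\sigma(N_1,N_2,N_3)$ is the set of trigonometric polynomials $f(\alpha,\beta,\gamma)=\sum_{|k|\le N_1}\sum_{|\ell|\le N_2}\sum_{|m|\le N_3} q(k,\ell,m)e^{i(k\alpha+\ell\beta+m\gamma)}$ with $f\ge0$ for all real $\alpha,\beta,\gamma$; $Q(N_1,N_2,N_3)$ is the set of $f\in\sigma(N_1,N_2,N_3)$ of the form $\sum_{j=1}^r|F_j|^2$ with $F_j=\sum_{0\le k\le N_1,0\le\ell\le N_2,0\le m\le N_3}q_j(k,\ell,m)e^{i(k\alpha+\ell\beta+m\gamma)}$. $\sigma_P(2N_1,2N_2,2N_3)$ is the set of real polynomials $f(x,y,z)=\sum_{0\le k\le 2N_1}\sum_{0\le\ell\le2N_2}\sum_{0\le m\le 2N_3}a_{k,\ell,m}x^ky^\ell z^m$ that are nonnegative on $\mathbb R^3$; $Q_P(2N_1,2N_2,2N_3)$ is the set of those $f\in\sigma_P(2N_1,2N_2,2N_3)$ that can be written $\sum_{j=1}^r|F_j(x,y,z)|^2$ with polynomials $F_j$. The Calderon transformation is the linear map $(Cf)(x,y,z)=(x^2+1)^{N_1}(y^2+1)^{N_2}(z^2+1)^{N_3}f(\alpha,\beta,\gamma)$,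 where $e^{i\alpha}=\frac{x+i}{x-i}$, $e^{i\beta}=\frac{y+i}{y-i}$, $e^{i\gamma}=\frac{z+i}{z-i}$. An element $f$ of a convex cone $U$ is extremal (an extremal point) if whenever $f=g+h$ with $g,h\in U$, both $g,h$ are nonnegative multiples of $f$. A convex subset $D\subseteq U$ is an extremal face of $U$ if whenever a point of $D$ lies in the relative interior of a segment contained in $U$, the whole segment lies in $D$. *)

theory Defs
  imports "HOL-Analysis.Analysis"
begin

type_synonym fn3 = "real \<times> real \<times> real \<Rightarrow> real"

definition trig_poly :: "nat \<Rightarrow> nat \<Rightarrow> nat \<Rightarrow> fn3 \<Rightarrow> bool" where
  "trig_poly N1 N2 N3 f \<longleftrightarrow>
     (\<exists>q :: int \<times> int \<times> int \<Rightarrow> complex. \<forall>a b c.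
        complex_of_real (f (a, b, c)) =
        (\<Sum>k\<in>{- int N1..int N1}. \<Sum>l\<in>{- int N2..int N2}. \<Sum>m\<in>{- int N3..int N3}.
           q (k, l, m) * exp (\<i> * complex_of_real (of_int k * a + of_int l * b + of_int m * c))))"

definition sigma_trig :: "nat \<Rightarrow> nat \<Rightarrow> nat \<Rightarrow> fn3 set" where
  "sigma_trig N1 N2 N3 = {f. trig_poly N1 N2 N3 f \<and> (\<forall>p. 0 \<le> f p)}"

definition Q_trig :: "nat \<Rightarrow> nat \<Rightarrow> nat \<Rightarrow> fn3 set" where
  "Q_trig N1 N2 N3 = {f \<in> sigma_trig N1 N2 N3.
     \<exists>(r::nat) (qs :: nat \<Rightarrow> nat \<times> nat \<times> nat \<Rightarrow> complex). \<forall>a b c.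
       f (a, b, c) = (\<Sum>j<r. (cmod (\<Sum>k\<le>N1. \<Sum>l\<le>N2. \<Sum>m\<le>N3.
          qs j (k, l, m) * exp (\<i> * complex_of_real (real k * a + real l * b + real m * c))))\<^sup>2)}"

definition real_poly3 :: "nat \<Rightarrow> nat \<Rightarrow> nat \<Rightarrow> fn3 \<Rightarrow> bool" where
  "real_poly3 D1 D2 D3 f \<longleftrightarrow>
     (\<exists>a :: nat \<times> nat \<times> nat \<Rightarrow> real. \<forall>x y z.
        f (x, y, z) = (\<Sum>k\<le>D1. \<Sum>l\<le>D2. \<Sum>m\<le>D3. a (k, l, m) * x ^ k * y ^ l * z ^ m))"

definition sigma_P :: "nat \<Rightarrow> nat \<Rightarrow> nat \<Rightarrow> fn3 set" where
  "sigma_P D1 D2 D3 = {f. real_poly3 D1 D2 D3 f \<and> (\<forall>p. 0 \<le> f p)}"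

definition Q_P :: "nat \<Rightarrow> nat \<Rightarrow> nat \<Rightarrow> fn3 set" where
  "Q_P D1 D2 D3 = {f \<in> sigma_P D1 D2 D3.
     \<exists>(r::nat) (D::nat) (Fs :: nat \<Rightarrow> nat \<times> nat \<times> nat \<Rightarrow> complex). \<forall>x y z.
       f (x, y, z) = (\<Sum>j<r. (cmod (\<Sum>k\<le>D. \<Sum>l\<le>D. \<Sum>m\<le>D.
          Fs j (k, l, m) * complex_of_real x ^ k * complex_of_real y ^ l * complex_of_real z ^ m))\<^sup>2)}"

definition cal_angle :: "real \<Rightarrow> real" where
  "cal_angle x = Arg ((complex_of_real x + \<i>) / (complex_of_real x - \<i>))"

definition calderon :: "nat \<Rightarrow> nat \<Rightarrow> nat \<Rightarrow> fn3 \<Rightarrow> fn3" where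
  "calderon N1 N2 N3 f = (\<lambda>(x, y, z). (x\<^sup>2 + 1) ^ N1 * (y\<^sup>2 + 1) ^ N2 * (z\<^sup>2 + 1) ^ N3 *
      f (cal_angle x, cal_angle y, cal_angle z))"

definition extremal_point :: "fn3 set \<Rightarrow> fn3 \<Rightarrow> bool" where
  "extremal_point U f \<longleftrightarrow> f \<in> U \<and>
     (\<forall>g\<in>U. \<forall>h\<in>U. f = (\<lambda>p. g p + h p) \<longrightarrow>
        (\<exists>c\<ge>0. g = (\<lambda>p. c * f p)) \<and> (\<exists>d\<ge>0. h = (\<lambda>p. d * f p)))"

definition comb3 :: "fn3 \<Rightarrow> fn3 \<Rightarrow> real \<Rightarrow> fn3" where
  "comb3 g h t = (\<lambda>p. (1 - t) * g p + t * h p)"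

definition extremal_face :: "fn3 set \<Rightarrow> fn3 set \<Rightarrow> bool" where
  "extremal_face U D \<longleftrightarrow> D \<subseteq> U \<and>
     (\<forall>g\<in>D. \<forall>h\<in>D. \<forall>t\<in>{0..1}. comb3 g h t \<in> D) \<and>
     (\<forall>g\<in>U. \<forall>h\<in>U. (\<forall>s\<in>{0..1}. comb3 g h s \<in> U) \<longrightarrow>
        (\<forall>t. 0 < t \<and> t < 1 \<and> comb3 g h t \<in> D \<longrightarrow> (\<forall>s\<in>{0..1}. comb3 g h s \<in> D)))"

end

(* The substitution e^(i alpha) = (x + i)/(x - i) is the Cayley map from the real line onto the
   unit circle minus 1. The weight (x^2 + 1)^N clears all denominators, since
   (x^2 + 1)^N e^(-i N alpha) = (x - i)^(2N) and (x - i)^M e^(i k alpha) = (x - i)^(M - k) (x + i)^k,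
   and conversely x^n expands in the basis (x + i)^a (x - i)^(M - a). Hence C maps the
   trigonometric polynomials of degree (N1, N2, N3) linearly and injectively onto the real
   polynomials of degree (2 N1, 2 N2, 2 N3); positivity transfers both ways because the weight is
   positive and the image of the Cayley map is dense in the circle. For sums of squares,
   C |F|^2 = |(x - i)^N1 (y - i)^N2 (z - i)^N3 F|^2, and conversely, if a sum of squared moduli
   sum_j |P_j|^2 has degree at most 2N in a variable, the leading terms cannot cancel, so each
   P_j has degree at most N there and comes from a trigonometric polynomial. Thus C restricts to
   bijections sigma -> sigma_P and Q -> Q_P that are restrictions of a linear map injective on a
   linear space containing both cones, and such a map preserves extremal points and faces. *)

theory Submission
  imports Defs "HOL-Computational_Algebra.Polynomial"
begin

section \<open>The Cayley map\<close>

definition cayley :: "real \<Rightarrow> complex" where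
  "cayley x = (of_real x + \<i>) / (of_real x - \<i>)"

lemma of_real_minus_ii_nonzero: "complex_of_real x - \<i> \<noteq> 0"
  by (simp add: complex_eq_iff)

lemma of_real_plus_ii_nonzero: "complex_of_real x + \<i> \<noteq> 0"
  by (simp add: complex_eq_iff)

lemma norm_of_real_minus_ii_squared: "(cmod (complex_of_real x - \<i>))\<^sup>2 = x\<^sup>2 + 1"
  by (simp add: cmod_def)

lemma norm_cayley: "cmod (cayley x) = 1"
proof -
  have "cmod (complex_of_real x + \<i>) = cmod (complex_of_real x - \<i>)"
    by (simp add: cmod_def)
  then show ?thesis by (simp add: cayley_def norm_divide complex_eq_iff)
qed

lemma cis_cal_angle: "cis (cal_angle x) = cayley x"
proof -
  have "cayley x \<noteq> 0" using norm_cayley[of x] by auto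
  then show ?thesis
    unfolding cal_angle_def cayley_def[symmetric] by (simp add: cis_Arg sgn_div_norm norm_cayley)
qed

lemma cis_in_range_cayley:
  assumes "cis t \<noteq> 1"
  shows "cis t \<in> range cayley"
proof -
  have "cos t \<noteq> 1"
  proof
    assume "cos t = 1"
    then have "sin t = 0" using sin_cos_squared_add[of t] by simp
    with \<open>cos t = 1\<close> show False using assms by (simp add: complex_eq_iff)
  qed
  define x where "x = sin t / (1 - cos t)"
  have "sin t * sin t = (1 + cos t) * (1 - cos t)"
    using sin_cos_squared_add3[of t] by (simp add: algebra_simps)
  then have "x * (1 - cos t) = sin t" "x * sin t = 1 + cos t"
    using \<open>cos t \<noteq> 1\<close> by (simp_all add: x_def field_simps)
  then have "complex_of_real x + \<i> = cis t * (complex_of_real x - \<i>)"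
    by (simp add: complex_eq_iff algebra_simps)
  then have "cayley x = cis t"
    using of_real_minus_ii_nonzero[of x] by (simp add: cayley_def field_simps)
  then show ?thesis by (metis rangeI)
qed

lemma cayley_tendsto_1: "(cayley \<longlongrightarrow> 1) at_top"
proof -
  have "cayley = (\<lambda>x. 1 + 2 * \<i> / (of_real x - \<i>))"
    using of_real_minus_ii_nonzero by (auto simp: fun_eq_iff cayley_def field_simps)
  moreover have "((\<lambda>x. 2 * \<i> / (of_real x - \<i>)) \<longlongrightarrow> 0) at_top"
    using tendsto_divide_0[OF tendsto_const
        tendsto_add_filterlim_at_infinity'[OF filterlim_of_real_at_infinity tendsto_const[of "- \<i>"]]]
    by simp
  ultimately show ?thesis
    using tendsto_add[OF tendsto_const[of 1]] by force
qed

lemma cis_in_closed_if_cayley_in: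
  assumes "isCont H 1" and "closed S" and "\<And>x. H (cayley x) \<in> S"
  shows "H (cis t) \<in> S"
proof (cases "cis t = 1")
  case True
  have "((\<lambda>x. H (cayley x)) \<longlongrightarrow> H 1) at_top"
    using isCont_tendsto_compose[OF assms(1) cayley_tendsto_1] .
  then have "H 1 \<in> S"
    by (rule Lim_in_closed_set[OF assms(2), rotated 2]) (simp_all add: assms(3))
  then show ?thesis using True by simp
next
  case False
  then obtain x where "cis t = cayley x" using cis_in_range_cayley by blast
  then show ?thesis using assms(3) by simp
qed

definition sep_isCont_at_1 :: "(complex \<Rightarrow> complex \<Rightarrow> complex \<Rightarrow> 'a::topological_space) \<Rightarrow> bool" where
  "sep_isCont_at_1 G \<longleftrightarrow>
     (\<forall>v w. isCont (\<lambda>u. G u v w) 1) \<and> (\<forall>u w. isCont (\<lambda>v. G u v w) 1) \<and> (\<forall>u v. isCont (\<lambda>w. G u v w) 1)"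

lemma torus_in_closed_if_cayley_in:
  assumes cont: "sep_isCont_at_1 G" and S: "closed S"
    and "\<And>x y z. G (cayley x) (cayley y) (cayley z) \<in> S"
  shows "G (cis a) (cis b) (cis c) \<in> S"
proof -
  note cont = cont[unfolded sep_isCont_at_1_def]
  have 1: "G (cis a) (cayley y) (cayley z) \<in> S" for a y z
    by (rule cis_in_closed_if_cayley_in[of "\<lambda>u. G u _ _"]) (use cont S assms(3) in auto)
  have 2: "G (cis a) (cis b) (cayley z) \<in> S" for a b z
    by (rule cis_in_closed_if_cayley_in[of "\<lambda>v. G _ v _"]) (use cont S 1 in auto)
  show ?thesis
    by (rule cis_in_closed_if_cayley_in[of "\<lambda>w. G _ _ w"]) (use cont S 2 in auto)
qed

lemma poly_eq_sum_upto:
  fixes x :: "'a::comm_semiring_1"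
  assumes "degree p \<le> n"
  shows "poly p x = (\<Sum>i\<le>n. coeff p i * x ^ i)"
proof -
  have "poly p x = poly (\<Sum>i\<le>n. monom (coeff p i) i) x"
    by (simp only: poly_as_sum_of_monoms'[OF assms])
  then show ?thesis by (simp add: poly_sum poly_monom)
qed

definition cayley_basis :: "nat \<Rightarrow> nat \<Rightarrow> complex poly" where
  "cayley_basis M k = [:-\<i>, 1:] ^ (M - k) * [:\<i>, 1:] ^ k"

lemma poly_cayley_basis: "poly (cayley_basis M k) z = (z - \<i>) ^ (M - k) * (z + \<i>) ^ k"
  by (simp add: cayley_basis_def poly_power algebra_simps)

lemma degree_cayley_basis:
  assumes "k \<le> M"
  shows "degree (cayley_basis M k) \<le> M"
proof -
  have "degree (cayley_basis M k) \<le> (M - k) + k"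
    unfolding cayley_basis_def using degree_mult_le by (metis degree_linear_power)
  then show ?thesis using assms by simp
qed

lemma cayley_power_expand:
  assumes "k \<le> M"
  shows "(of_real x - \<i>) ^ M * cayley x ^ k = (\<Sum>i\<le>M. coeff (cayley_basis M k) i * of_real x ^ i)"
proof -
  have "(of_real x - \<i>) ^ M = (of_real x - \<i>) ^ (M - k) * (of_real x - \<i>) ^ k"
    using assms by (simp flip: power_add)
  then have "(of_real x - \<i>) ^ M * cayley x ^ k = poly (cayley_basis M k) (of_real x)"
    using of_real_minus_ii_nonzero[of x]
    by (simp add: poly_cayley_basis cayley_def power_divide field_simps)
  then show ?thesis by (simp add: poly_eq_sum_upto[OF degree_cayley_basis[OF assms]])
qed

text \<open>With \<open>t = (z + \<i>) / (z - \<i>)\<close> one has \<open>z = (z - \<i>) (1 + t) / 2\<close> and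
  \<open>1 = \<i> (z - \<i>) (1 - t) / 2\<close>; multiplying out \<open>z\<^sup>n \<cdot> 1\<^bsup>M - n\<^esup>\<close> gives the polynomial in \<open>t\<close> below.\<close>
definition cayley_inverse_poly :: "nat \<Rightarrow> nat \<Rightarrow> complex poly" where
  "cayley_inverse_poly M n = [:1/2, 1/2:] ^ n * [:\<i>/2, -\<i>/2:] ^ (M - n)"

lemma degree_cayley_inverse_poly:
  assumes "n \<le> M"
  shows "degree (cayley_inverse_poly M n) \<le> M"
proof -
  have "degree [:a, b:] \<le> 1" for a b :: complex
    by (simp add: degree_pCons_eq_if)
  then have "degree (cayley_inverse_poly M n) \<le> 1 * n + 1 * (M - n)"
    unfolding cayley_inverse_poly_def
    by (intro order.trans[OF degree_mult_le] add_mono order.trans[OF degree_power_le] mult_right_mono) auto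
  then show ?thesis using assms by simp
qed

lemma power_expand_cayley:
  assumes "n \<le> M"
  shows "of_real x ^ n = (\<Sum>a\<le>M. coeff (cayley_inverse_poly M n) a * ((of_real x - \<i>) ^ M * cayley x ^ a))"
proof -
  define X where "X = complex_of_real x"
  have X: "X - \<i> \<noteq> 0" "(X - \<i>) * cayley x = X + \<i>"
    using of_real_minus_ii_nonzero[of x] by (simp_all add: X_def cayley_def)
  let ?p = "[:1/2, 1/2:] :: complex poly" and ?q = "[:\<i>/2, -\<i>/2:] :: complex poly"
  have "(X - \<i>) * poly ?p (cayley x) = ((X - \<i>) + (X - \<i>) * cayley x) / 2"
    by (simp add: field_simps)
  also have "\<dots> = X"
    unfolding X(2) by (simp add: field_simps)
  finally have X1: "(X - \<i>) * poly ?p (cayley x) = X" .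
  have "(X - \<i>) * poly ?q (cayley x) = \<i>/2 * ((X - \<i>) - (X - \<i>) * cayley x)"
    by (simp add: field_simps)
  also have "\<dots> = 1"
    unfolding X(2) by (simp add: field_simps)
  finally have X2: "(X - \<i>) * poly ?q (cayley x) = 1" .
  have "X ^ n = ((X - \<i>) * poly ?p (cayley x)) ^ n * ((X - \<i>) * poly ?q (cayley x)) ^ (M - n)"
    by (simp only: X1 X2 power_one mult_1_right)
  also have "\<dots> = (X - \<i>) ^ (n + (M - n)) * poly (cayley_inverse_poly M n) (cayley x)"
    by (simp add: cayley_inverse_poly_def poly_power power_mult_distrib power_add mult_ac del: poly_pCons)
  also have "\<dots> = (X - \<i>) ^ M * poly (cayley_inverse_poly M n) (cayley x)"
    using assms by simp
  also have "\<dots> = (\<Sum>a\<le>M. coeff (cayley_inverse_poly M n) a * ((X - \<i>) ^ M * cayley x ^ a))"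
    by (simp add: poly_eq_sum_upto[OF degree_cayley_inverse_poly[OF assms]] sum_distrib_left mult_ac)
  finally show ?thesis by (simp add: X_def)
qed

section \<open>Trivariate polynomials\<close>

definition sum3 :: "(nat \<times> nat \<times> nat \<Rightarrow> 'a::comm_semiring_1) \<Rightarrow> nat \<Rightarrow> nat \<Rightarrow> nat \<Rightarrow>
    (nat \<Rightarrow> 'a) \<Rightarrow> (nat \<Rightarrow> 'a) \<Rightarrow> (nat \<Rightarrow> 'a) \<Rightarrow> 'a" where
  "sum3 c d1 d2 d3 \<phi>1 \<phi>2 \<phi>3 = (\<Sum>k\<le>d1. \<Sum>l\<le>d2. \<Sum>m\<le>d3. c (k, l, m) * (\<phi>1 k * \<phi>2 l * \<phi>3 m))"

abbreviation poly3 :: "(nat \<times> nat \<times> nat \<Rightarrow> 'a::comm_semiring_1) \<Rightarrow> nat \<Rightarrow> nat \<Rightarrow> nat \<Rightarrow> 'a \<Rightarrow> 'a \<Rightarrow> 'a \<Rightarrow> 'a" where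
  "poly3 c d1 d2 d3 u v w \<equiv> sum3 c d1 d2 d3 ((^) u) ((^) v) ((^) w)"

lemma sum3_as_box_sum:
  "sum3 c d1 d2 d3 \<phi>1 \<phi>2 \<phi>3 = (\<Sum>(k, l, m)\<in>{..d1} \<times> {..d2} \<times> {..d3}. c (k, l, m) * (\<phi>1 k * \<phi>2 l * \<phi>3 m))"
  by (simp add: sum3_def sum.cartesian_product)

lemma sum3_subst:
  assumes "\<And>k. k \<le> d1 \<Longrightarrow> \<phi>1 k = (\<Sum>a\<le>e1. A1 k a * \<psi>1 a)"
    and "\<And>l. l \<le> d2 \<Longrightarrow> \<phi>2 l = (\<Sum>b\<le>e2. A2 l b * \<psi>2 b)"
    and "\<And>m. m \<le> d3 \<Longrightarrow> \<phi>3 m = (\<Sum>h\<le>e3. A3 m h * \<psi>3 h)"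
  shows "sum3 c d1 d2 d3 \<phi>1 \<phi>2 \<phi>3 =
    sum3 (\<lambda>(a, b, h). \<Sum>k\<le>d1. \<Sum>l\<le>d2. \<Sum>m\<le>d3. c (k, l, m) * A1 k a * A2 l b * A3 m h) e1 e2 e3 \<psi>1 \<psi>2 \<psi>3"
proof -
  let ?D = "{..d1} \<times> {..d2} \<times> {..d3}" and ?E = "{..e1} \<times> {..e2} \<times> {..e3}"
  define A where "A = (\<lambda>(k, l, m) (a, b, h). A1 k a * A2 l b * A3 m h)"
  define \<Psi> where "\<Psi> = (\<lambda>(a, b, h). \<psi>1 a * \<psi>2 b * \<psi>3 h)"
  have "\<phi>1 k * \<phi>2 l * \<phi>3 m = (\<Sum>y\<in>?E. A (k, l, m) y * \<Psi> y)" if "(k, l, m) \<in> ?D" for k l m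
  proof -
    have "\<phi>1 k * \<phi>2 l * \<phi>3 m = (\<Sum>a\<le>e1. A1 k a * \<psi>1 a) * (\<Sum>b\<le>e2. A2 l b * \<psi>2 b) * (\<Sum>h\<le>e3. A3 m h * \<psi>3 h)"
      using that assms by simp
    also have "\<dots> = (\<Sum>a\<le>e1. \<Sum>b\<le>e2. \<Sum>h\<le>e3. A1 k a * \<psi>1 a * (A2 l b * \<psi>2 b) * (A3 m h * \<psi>3 h))"
      by (subst mult.assoc, subst sum_product, subst sum_product) (simp add: sum_distrib_left mult.assoc)
    finally show ?thesis
      by (simp add: sum.cartesian_product A_def \<Psi>_def case_prod_beta mult_ac)
  qed
  then have "sum3 c d1 d2 d3 \<phi>1 \<phi>2 \<phi>3 = (\<Sum>x\<in>?D. c x * (\<Sum>y\<in>?E. A x y * \<Psi> y))"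
    unfolding sum3_as_box_sum by (intro sum.cong) auto
  also have "\<dots> = (\<Sum>y\<in>?E. (\<Sum>x\<in>?D. c x * A x y) * \<Psi> y)"
    unfolding sum_distrib_left sum_distrib_right by (subst sum.swap) (simp add: mult.assoc)
  also have "\<dots> = sum3 (\<lambda>(a, b, h). \<Sum>k\<le>d1. \<Sum>l\<le>d2. \<Sum>m\<le>d3. c (k, l, m) * A1 k a * A2 l b * A3 m h) e1 e2 e3 \<psi>1 \<psi>2 \<psi>3"
    unfolding sum3_as_box_sum
    by (intro sum.cong) (auto simp: A_def \<Psi>_def sum.cartesian_product sum_distrib_right mult.assoc intro!: sum.cong)
  finally show ?thesis .
qed

lemma sum3_scale:
  "w1 * w2 * w3 * sum3 c d1 d2 d3 \<phi>1 \<phi>2 \<phi>3 = sum3 c d1 d2 d3 (\<lambda>k. w1 * \<phi>1 k) (\<lambda>l. w2 * \<phi>2 l) (\<lambda>m. w3 * \<phi>3 m)"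
  unfolding sum3_def by (simp add: sum_distrib_left mult_ac)

lemma sum3_linear:
  "sum3 (\<lambda>i. s * c i + t * c' i) d1 d2 d3 \<phi>1 \<phi>2 \<phi>3 = s * sum3 c d1 d2 d3 \<phi>1 \<phi>2 \<phi>3 + t * sum3 c' d1 d2 d3 \<phi>1 \<phi>2 \<phi>3"
  unfolding sum3_def by (simp add: sum.distrib sum_distrib_left algebra_simps)

lemma sum3_shrink_box:
  assumes "d1 \<le> e1" "d2 \<le> e2" "d3 \<le> e3"
    and "\<And>k l m. k \<le> e1 \<Longrightarrow> l \<le> e2 \<Longrightarrow> m \<le> e3 \<Longrightarrow> d1 < k \<or> d2 < l \<or> d3 < m \<Longrightarrow> c (k, l, m) = 0"
  shows "sum3 c e1 e2 e3 \<phi>1 \<phi>2 \<phi>3 = sum3 c d1 d2 d3 \<phi>1 \<phi>2 \<phi>3"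
  unfolding sum3_as_box_sum
proof (rule sum.mono_neutral_right)
  show "\<forall>i\<in>{..e1} \<times> {..e2} \<times> {..e3} - {..d1} \<times> {..d2} \<times> {..d3}.
      (case i of (k, l, m) \<Rightarrow> c (k, l, m) * (\<phi>1 k * \<phi>2 l * \<phi>3 m)) = 0"
    using assms(4) by fastforce
qed (use assms(1-3) in auto)

lemma sum3_zero_extend:
  assumes "d1 \<le> e1" "d2 \<le> e2" "d3 \<le> e3"
  shows "sum3 (\<lambda>(k, l, m). if k \<le> d1 \<and> l \<le> d2 \<and> m \<le> d3 then c (k, l, m) else 0) e1 e2 e3 \<phi>1 \<phi>2 \<phi>3
    = sum3 c d1 d2 d3 \<phi>1 \<phi>2 \<phi>3"
  by (subst sum3_shrink_box[OF assms]) (auto simp: sum3_def intro!: sum.cong)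

lemma poly3_eq_poly_first:
  "poly3 c d1 d2 d3 u v w = poly (\<Sum>k\<le>d1. monom (\<Sum>l\<le>d2. \<Sum>m\<le>d3. c (k, l, m) * (v ^ l * w ^ m)) k) u"
  by (simp add: sum3_def poly_sum poly_monom sum_distrib_left sum_distrib_right mult_ac)

lemma poly3_swap12: "poly3 c d1 d2 d3 u v w = poly3 (\<lambda>(l, k, m). c (k, l, m)) d2 d1 d3 v u w"
  unfolding sum3_def by (subst sum.swap) (simp add: mult_ac)

lemma poly3_swap13: "poly3 c d1 d2 d3 u v w = poly3 (\<lambda>(m, l, k). c (k, l, m)) d3 d2 d1 w v u"
  unfolding sum3_as_box_sum
  by (rule sum.reindex_bij_witness[of _ "\<lambda>(m, l, k). (k, l, m)" "\<lambda>(k, l, m). (m, l, k)"]) (auto simp: mult_ac)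

lemma of_real_poly3:
  "of_real (poly3 a d1 d2 d3 x y z) = poly3 (\<lambda>i. of_real (a i)) d1 d2 d3 (of_real x) (of_real y) (of_real z)"
  by (simp add: sum3_def)

lemma cayley_poly3_eq_poly3:
  "\<exists>c'. \<forall>x y z. (of_real x - \<i>) ^ M1 * (of_real y - \<i>) ^ M2 * (of_real z - \<i>) ^ M3 *
      poly3 c M1 M2 M3 (cayley x) (cayley y) (cayley z) =
    poly3 c' M1 M2 M3 (complex_of_real x) (complex_of_real y) (complex_of_real z)"
  by (intro exI allI, subst sum3_scale, rule sum3_subst) (simp_all add: cayley_power_expand)

lemma poly3_eq_cayley_poly3:
  "\<exists>c'. \<forall>x y z. poly3 c M1 M2 M3 (complex_of_real x) (complex_of_real y) (complex_of_real z) =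
    (of_real x - \<i>) ^ M1 * (of_real y - \<i>) ^ M2 * (of_real z - \<i>) ^ M3 *
      poly3 c' M1 M2 M3 (cayley x) (cayley y) (cayley z)"
  by (intro exI allI, subst sum3_scale, rule sum3_subst) (simp_all add: power_expand_cayley)

section \<open>Trigonometric polynomials and the Calderon transformation\<close>

text \<open>On the unit circle \<open>cnj u = u\<^sup>-\<^sup>1\<close>, so on the torus this is the Laurent polynomial
  \<open>\<Sum> c (k, l, m) u\<^bsup>k - N1\<^esup> v\<^bsup>l - N2\<^esup> w\<^bsup>m - N3\<^esup>\<close>; writing it with \<open>cnj\<close> makes it continuous everywhere.\<close>
definition laurent3 :: "(nat \<times> nat \<times> nat \<Rightarrow> complex) \<Rightarrow> nat \<Rightarrow> nat \<Rightarrow> nat \<Rightarrow> complex \<Rightarrow> complex \<Rightarrow> complex \<Rightarrow> complex" where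
  "laurent3 c N1 N2 N3 u v w = cnj u ^ N1 * cnj v ^ N2 * cnj w ^ N3 * poly3 c (2*N1) (2*N2) (2*N3) u v w"

lemma sum_atMost_double_eq_sum_int:
  "(\<Sum>i\<le>2*N. g i) = (\<Sum>k\<in>{-int N..int N}. g (nat (int N + k)))"
  by (rule sum.reindex_bij_witness[of _ "\<lambda>k. nat (int N + k)" "\<lambda>i. int i - int N"]) auto

lemma cis_of_int_mult:
  assumes "\<bar>k\<bar> \<le> int N"
  shows "cis (of_int k * a) = cnj (cis a) ^ N * cis a ^ nat (int N + k)"
proof -
  have "real (nat (int N + k)) = real N + of_int k"
    using assms by simp
  have "cnj (cis a) ^ N * cis a ^ nat (int N + k) = cis (real N * (- a)) * cis (real (nat (int N + k)) * a)"
    by (simp only: cis_cnj Complex.DeMoivre)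
  also have "\<dots> = cis (of_int k * a)"
    using \<open>real (nat (int N + k)) = real N + of_int k\<close> by (simp add: cis_mult algebra_simps)
  finally show ?thesis ..
qed

lemma trig_sum_eq_laurent3:
  "(\<Sum>k\<in>{- int N1..int N1}. \<Sum>l\<in>{- int N2..int N2}. \<Sum>m\<in>{- int N3..int N3}.
      q (k, l, m) * exp (\<i> * complex_of_real (of_int k * a + of_int l * b + of_int m * c)))
   = laurent3 (\<lambda>(i, j, h). q (int i - int N1, int j - int N2, int h - int N3)) N1 N2 N3 (cis a) (cis b) (cis c)"
proof -
  have "exp (\<i> * complex_of_real (of_int k * a + of_int l * b + of_int m * c))
      = cnj (cis a) ^ N1 * cis a ^ nat (int N1 + k) * (cnj (cis b) ^ N2 * cis b ^ nat (int N2 + l)) *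
        (cnj (cis c) ^ N3 * cis c ^ nat (int N3 + m))"
    if "k \<in> {- int N1..int N1}" "l \<in> {- int N2..int N2}" "m \<in> {- int N3..int N3}" for k l m
  proof -
    have "exp (\<i> * complex_of_real (of_int k * a + of_int l * b + of_int m * c))
        = cis (of_int k * a) * cis (of_int l * b) * cis (of_int m * c)"
      by (simp add: cis_conv_exp distrib_left exp_add)
    moreover have "\<bar>k\<bar> \<le> int N1" "\<bar>l\<bar> \<le> int N2" "\<bar>m\<bar> \<le> int N3"
      using that by auto
    ultimately show ?thesis
      by (simp only: cis_of_int_mult)
  qed
  then show ?thesis
    unfolding laurent3_def sum3_scale unfolding sum3_def sum_atMost_double_eq_sum_int
    by (intro sum.cong refl) simp
qed

lemma trig_poly_iff_laurent3:
  "trig_poly N1 N2 N3 f \<longleftrightarrow>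
    (\<exists>c. \<forall>a b c'. complex_of_real (f (a, b, c')) = laurent3 c N1 N2 N3 (cis a) (cis b) (cis c'))"
proof
  assume "trig_poly N1 N2 N3 f"
  then show "\<exists>c. \<forall>a b c'. complex_of_real (f (a, b, c')) = laurent3 c N1 N2 N3 (cis a) (cis b) (cis c')"
    unfolding trig_poly_def trig_sum_eq_laurent3 by blast
next
  assume "\<exists>c. \<forall>a b c'. complex_of_real (f (a, b, c')) = laurent3 c N1 N2 N3 (cis a) (cis b) (cis c')"
  then obtain c where "\<forall>a b c'. complex_of_real (f (a, b, c')) = laurent3 c N1 N2 N3 (cis a) (cis b) (cis c')" ..
  then show "trig_poly N1 N2 N3 f"
    unfolding trig_poly_def trig_sum_eq_laurent3
    by (intro exI[of _ "\<lambda>(k, l, m). c (nat (int N1 + k), nat (int N2 + l), nat (int N3 + m))"]) simp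
qed

lemma laurent3_linear:
  "laurent3 (\<lambda>i. s * c i + t * c' i) N1 N2 N3 u v w = s * laurent3 c N1 N2 N3 u v w + t * laurent3 c' N1 N2 N3 u v w"
  unfolding laurent3_def sum3_linear by (simp add: algebra_simps)

lemma trig_poly_linear:
  assumes "trig_poly N1 N2 N3 f" and "trig_poly N1 N2 N3 g"
  shows "trig_poly N1 N2 N3 (\<lambda>p. s * f p + t * g p)"
proof -
  obtain cf cg where
    "\<And>a b c. complex_of_real (f (a, b, c)) = laurent3 cf N1 N2 N3 (cis a) (cis b) (cis c)"
    "\<And>a b c. complex_of_real (g (a, b, c)) = laurent3 cg N1 N2 N3 (cis a) (cis b) (cis c)"
    using assms unfolding trig_poly_iff_laurent3 by metis
  then show ?thesis
    unfolding trig_poly_iff_laurent3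
    by (intro exI[of _ "\<lambda>i. of_real s * cf i + of_real t * cg i"]) (simp add: laurent3_linear)
qed

lemma sep_isCont_at_1_laurent3: "sep_isCont_at_1 (laurent3 c N1 N2 N3)"
  unfolding sep_isCont_at_1_def laurent3_def sum3_def by (intro conjI allI continuous_intros)

lemma sep_isCont_at_1_Re:
  "sep_isCont_at_1 G \<Longrightarrow> sep_isCont_at_1 (\<lambda>u v w. Re (G u v w))"
  unfolding sep_isCont_at_1_def by (simp add: isCont_Re)

definition calderon_weight :: "nat \<Rightarrow> nat \<Rightarrow> nat \<Rightarrow> real \<Rightarrow> real \<Rightarrow> real \<Rightarrow> real" where
  "calderon_weight N1 N2 N3 x y z = (x\<^sup>2 + 1) ^ N1 * (y\<^sup>2 + 1) ^ N2 * (z\<^sup>2 + 1) ^ N3"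

lemma calderon_weight_pos: "0 < calderon_weight N1 N2 N3 x y z"
  unfolding calderon_weight_def by (intro mult_pos_pos zero_less_power) (simp_all add: add_nonneg_pos)

lemma of_real_square_plus_1_power:
  "complex_of_real ((x\<^sup>2 + 1) ^ N) * cnj (cayley x) ^ N = (of_real x - \<i>) ^ (2 * N)"
proof -
  define X where "X = complex_of_real x"
  have "complex_of_real (x\<^sup>2 + 1) = (X + \<i>) * (X - \<i>)"
    by (simp add: X_def algebra_simps power2_eq_square)
  moreover have "cnj (cayley x) = (X - \<i>) / (X + \<i>)"
    by (simp add: X_def cayley_def)
  ultimately have "complex_of_real (x\<^sup>2 + 1) * cnj (cayley x) = (X - \<i>) ^ 2"
    using of_real_plus_ii_nonzero[of x] by (simp add: X_def[symmetric] power2_eq_square)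
  then show ?thesis
    by (simp add: X_def power_mult flip: power_mult_distrib)
qed

lemma calderon_weight_laurent3_eq_poly3:
  "\<exists>c'. \<forall>x y z. of_real (calderon_weight N1 N2 N3 x y z) * laurent3 c N1 N2 N3 (cayley x) (cayley y) (cayley z) =
    poly3 c' (2*N1) (2*N2) (2*N3) (complex_of_real x) (complex_of_real y) (complex_of_real z)"
proof -
  have "of_real (calderon_weight N1 N2 N3 x y z) * laurent3 c N1 N2 N3 (cayley x) (cayley y) (cayley z) =
      (of_real x - \<i>) ^ (2*N1) * (of_real y - \<i>) ^ (2*N2) * (of_real z - \<i>) ^ (2*N3) *
      poly3 c (2*N1) (2*N2) (2*N3) (cayley x) (cayley y) (cayley z)" for x y z
    by (simp add: calderon_weight_def laurent3_def flip: of_real_square_plus_1_power)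
  then show ?thesis using cayley_poly3_eq_poly3 by simp
qed

lemma poly3_eq_calderon_weight_laurent3:
  "\<exists>c'. \<forall>x y z. poly3 c (2*N1) (2*N2) (2*N3) (complex_of_real x) (complex_of_real y) (complex_of_real z) =
    of_real (calderon_weight N1 N2 N3 x y z) * laurent3 c' N1 N2 N3 (cayley x) (cayley y) (cayley z)"
proof -
  have "of_real (calderon_weight N1 N2 N3 x y z) * laurent3 c' N1 N2 N3 (cayley x) (cayley y) (cayley z) =
      (of_real x - \<i>) ^ (2*N1) * (of_real y - \<i>) ^ (2*N2) * (of_real z - \<i>) ^ (2*N3) *
      poly3 c' (2*N1) (2*N2) (2*N3) (cayley x) (cayley y) (cayley z)" for c' x y z
    by (simp add: calderon_weight_def laurent3_def flip: of_real_square_plus_1_power)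
  then show ?thesis using poly3_eq_cayley_poly3 by simp
qed

definition on_torus :: "(complex \<Rightarrow> complex \<Rightarrow> complex \<Rightarrow> real) \<Rightarrow> fn3" where
  "on_torus F = (\<lambda>(a, b, c). F (cis a) (cis b) (cis c))"

lemma calderon_on_torus:
  "calderon N1 N2 N3 (on_torus F) (x, y, z) = calderon_weight N1 N2 N3 x y z * F (cayley x) (cayley y) (cayley z)"
  by (simp add: calderon_def on_torus_def calderon_weight_def cis_cal_angle)

lemma on_torus_eqI:
  assumes "sep_isCont_at_1 F" and "sep_isCont_at_1 G"
    and "calderon N1 N2 N3 (on_torus F) = calderon N1 N2 N3 (on_torus G)"
  shows "on_torus F = on_torus G"
proof -
  have cont: "sep_isCont_at_1 (\<lambda>u v w. F u v w - G u v w)"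
    using assms(1,2) unfolding sep_isCont_at_1_def by (auto intro: isCont_diff)
  have "F (cayley x) (cayley y) (cayley z) - G (cayley x) (cayley y) (cayley z) \<in> {0}" for x y z
    using fun_cong[OF assms(3), of "(x, y, z)"] calderon_weight_pos[of N1 N2 N3 x y z]
    by (simp add: calderon_on_torus)
  then have "F (cis a) (cis b) (cis c) - G (cis a) (cis b) (cis c) \<in> {0}" for a b c
    by (rule torus_in_closed_if_cayley_in[OF cont closed_singleton])
  then show ?thesis by (auto simp: on_torus_def)
qed

lemma on_torus_nonnegI:
  assumes "sep_isCont_at_1 F" and "\<And>p. 0 \<le> calderon N1 N2 N3 (on_torus F) p"
  shows "0 \<le> on_torus F p"
proof -
  have "F (cayley x) (cayley y) (cayley z) \<in> {0..}" for x y z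
    using assms(2)[of "(x, y, z)"] calderon_weight_pos[of N1 N2 N3 x y z]
    by (simp add: calderon_on_torus zero_le_mult_iff)
  then have "F (cis a) (cis b) (cis c) \<in> {0..}" for a b c
    by (rule torus_in_closed_if_cayley_in[OF assms(1) closed_atLeast])
  then show ?thesis by (auto simp: on_torus_def split: prod.split)
qed

lemma trig_poly_eq_on_torus:
  assumes "\<And>a b c'. complex_of_real (f (a, b, c')) = laurent3 c N1 N2 N3 (cis a) (cis b) (cis c')"
  shows "f = on_torus (\<lambda>u v w. Re (laurent3 c N1 N2 N3 u v w))"
  unfolding on_torus_def using arg_cong[OF assms, of Re] by auto

lemma calderon_linear:
  "calderon N1 N2 N3 (\<lambda>p. s * f p + t * g p) = (\<lambda>p. s * calderon N1 N2 N3 f p + t * calderon N1 N2 N3 g p)"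
  unfolding calderon_def by (auto simp: fun_eq_iff algebra_simps)

lemma trig_poly_on_torus:
  assumes "trig_poly N1 N2 N3 f"
  obtains F where "sep_isCont_at_1 F" and "f = on_torus F"
  using assms unfolding trig_poly_iff_laurent3
  by (metis trig_poly_eq_on_torus sep_isCont_at_1_Re sep_isCont_at_1_laurent3)

lemma calderon_inj_on_trig_poly: "inj_on (calderon N1 N2 N3) (Collect (trig_poly N1 N2 N3))"
proof (rule inj_onI)
  fix f g assume "f \<in> Collect (trig_poly N1 N2 N3)" "g \<in> Collect (trig_poly N1 N2 N3)"
    and "calderon N1 N2 N3 f = calderon N1 N2 N3 g"
  moreover obtain F G where "sep_isCont_at_1 F" "f = on_torus F" "sep_isCont_at_1 G" "g = on_torus G"
    using calculation(1,2) trig_poly_on_torus by (metis mem_Collect_eq)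
  ultimately show "f = g"
    using on_torus_eqI by blast
qed

lemma real_poly3_iff_poly3:
  "real_poly3 D1 D2 D3 f \<longleftrightarrow> (\<exists>a. \<forall>x y z. f (x, y, z) = poly3 a D1 D2 D3 x y z)"
  by (simp add: real_poly3_def sum3_def mult.assoc)

lemma Re_poly3_of_real:
  "Re (poly3 c d1 d2 d3 (complex_of_real x) (complex_of_real y) (complex_of_real z)) = poly3 (\<lambda>i. Re (c i)) d1 d2 d3 x y z"
  by (simp add: sum3_def flip: of_real_power of_real_mult)

lemma calderon_sigma_trig:
  assumes "f \<in> sigma_trig N1 N2 N3"
  shows "calderon N1 N2 N3 f \<in> sigma_P (2*N1) (2*N2) (2*N3)"
proof -
  obtain c where "\<And>a b c'. complex_of_real (f (a, b, c')) = laurent3 c N1 N2 N3 (cis a) (cis b) (cis c')"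
    using assms unfolding sigma_trig_def trig_poly_iff_laurent3 by auto
  then have f: "f = on_torus (\<lambda>u v w. Re (laurent3 c N1 N2 N3 u v w))"
    by (rule trig_poly_eq_on_torus)
  obtain c' where c': "\<And>x y z. of_real (calderon_weight N1 N2 N3 x y z) * laurent3 c N1 N2 N3 (cayley x) (cayley y) (cayley z) =
      poly3 c' (2*N1) (2*N2) (2*N3) (complex_of_real x) (complex_of_real y) (complex_of_real z)"
    using calderon_weight_laurent3_eq_poly3 by blast
  have "calderon N1 N2 N3 f (x, y, z) = poly3 (\<lambda>i. Re (c' i)) (2*N1) (2*N2) (2*N3) x y z" for x y z
    using arg_cong[OF c'[of x y z], of Re] by (simp add: f calderon_on_torus Re_poly3_of_real)
  moreover have "0 \<le> calderon N1 N2 N3 f p" for p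
    using assms by (auto simp: calderon_def sigma_trig_def calderon_weight_def split: prod.split)
  ultimately show ?thesis
    unfolding sigma_P_def real_poly3_iff_poly3 by blast
qed

lemma sigma_P_in_calderon_image:
  assumes p: "p \<in> sigma_P (2*N1) (2*N2) (2*N3)"
  shows "p \<in> calderon N1 N2 N3 ` sigma_trig N1 N2 N3"
proof -
  obtain a where "\<And>x y z. p (x, y, z) = poly3 a (2*N1) (2*N2) (2*N3) x y z"
    using p unfolding sigma_P_def real_poly3_iff_poly3 by auto
  moreover obtain c where "\<And>x y z. poly3 (\<lambda>i. of_real (a i)) (2*N1) (2*N2) (2*N3) (complex_of_real x) (complex_of_real y) (complex_of_real z) =
      of_real (calderon_weight N1 N2 N3 x y z) * laurent3 c N1 N2 N3 (cayley x) (cayley y) (cayley z)"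
    using poly3_eq_calderon_weight_laurent3 by blast
  ultimately have pc: "complex_of_real (p (x, y, z)) =
      of_real (calderon_weight N1 N2 N3 x y z) * laurent3 c N1 N2 N3 (cayley x) (cayley y) (cayley z)" for x y z
    by (simp add: of_real_poly3)
  define F where "F u v w = Re (laurent3 c N1 N2 N3 u v w)" for u v w
  have cont: "sep_isCont_at_1 F"
    unfolding F_def by (intro sep_isCont_at_1_Re sep_isCont_at_1_laurent3)
  have calderon_F: "calderon N1 N2 N3 (on_torus F) = p"
  proof
    fix q :: "real \<times> real \<times> real"
    obtain x y z where q: "q = (x, y, z)" by (cases q)
    show "calderon N1 N2 N3 (on_torus F) q = p q"
      using arg_cong[OF pc[of x y z], of Re] by (simp add: q calderon_on_torus F_def)
  qed
  have "laurent3 c N1 N2 N3 (cayley x) (cayley y) (cayley z) = of_real (p (x, y, z) / calderon_weight N1 N2 N3 x y z)"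
    for x y z
    using pc[of x y z] calderon_weight_pos[of N1 N2 N3 x y z] by (simp add: field_simps)
  then have "laurent3 c N1 N2 N3 (cayley x) (cayley y) (cayley z) \<in> \<real>" for x y z
    by simp
  then have "laurent3 c N1 N2 N3 (cis a) (cis b) (cis c') \<in> \<real>" for a b c'
    by (rule torus_in_closed_if_cayley_in[OF sep_isCont_at_1_laurent3 closed_complex_Reals])
  then have "trig_poly N1 N2 N3 (on_torus F)"
    unfolding trig_poly_iff_laurent3 by (auto simp: on_torus_def F_def)
  moreover have "0 \<le> on_torus F q" for q
    by (rule on_torus_nonnegI[OF cont, of N1 N2 N3]) (use p calderon_F in \<open>auto simp: sigma_P_def\<close>)
  ultimately show ?thesis
    using calderon_F by (auto simp: sigma_trig_def)
qed

lemma calderon_image_sigma_trig: "calderon N1 N2 N3 ` sigma_trig N1 N2 N3 = sigma_P (2*N1) (2*N2) (2*N3)"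
  using calderon_sigma_trig sigma_P_in_calderon_image by blast

section \<open>Sums of squares\<close>

definition sos3 :: "nat \<Rightarrow> (nat \<Rightarrow> nat \<times> nat \<times> nat \<Rightarrow> complex) \<Rightarrow> nat \<Rightarrow> nat \<Rightarrow> nat \<Rightarrow>
    complex \<Rightarrow> complex \<Rightarrow> complex \<Rightarrow> real" where
  "sos3 r F d1 d2 d3 u v w = (\<Sum>j<r. (cmod (poly3 (F j) d1 d2 d3 u v w))\<^sup>2)"

lemma sum_exp_eq_poly3_cis:
  "(\<Sum>k\<le>N1. \<Sum>l\<le>N2. \<Sum>m\<le>N3. q (k, l, m) * exp (\<i> * complex_of_real (real k * a + real l * b + real m * c)))
   = poly3 q N1 N2 N3 (cis a) (cis b) (cis c)"
  unfolding sum3_def by (simp only: Complex.DeMoivre) (simp add: cis_conv_exp distrib_left exp_add mult_ac)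

lemma Q_trig_iff_sos3:
  "f \<in> Q_trig N1 N2 N3 \<longleftrightarrow> f \<in> sigma_trig N1 N2 N3 \<and> (\<exists>r F. f = on_torus (sos3 r F N1 N2 N3))"
  unfolding Q_trig_def sum_exp_eq_poly3_cis by (auto simp: on_torus_def sos3_def fun_eq_iff)

lemma Q_P_iff_sos3:
  "p \<in> Q_P D1 D2 D3 \<longleftrightarrow> p \<in> sigma_P D1 D2 D3 \<and>
    (\<exists>r D F. \<forall>x y z. p (x, y, z) = sos3 r F D D D (of_real x) (of_real y) (of_real z))"
  by (simp add: Q_P_def sos3_def sum3_def mult.assoc)

lemma sep_isCont_at_1_sos3: "sep_isCont_at_1 (sos3 r F d1 d2 d3)"
  unfolding sep_isCont_at_1_def sos3_def sum3_def by (intro conjI allI continuous_intros)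

lemma sos3_swap12: "sos3 r F d1 d2 d3 u v w = sos3 r (\<lambda>j (l, k, m). F j (k, l, m)) d2 d1 d3 v u w"
  unfolding sos3_def by (subst poly3_swap12) simp

lemma sos3_swap13: "sos3 r F d1 d2 d3 u v w = sos3 r (\<lambda>j (m, l, k). F j (k, l, m)) d3 d2 d1 w v u"
  unfolding sos3_def by (subst poly3_swap13) simp

lemma norm_cayley_weight_squared:
  "(cmod ((of_real x - \<i>) ^ N1 * (of_real y - \<i>) ^ N2 * (of_real z - \<i>) ^ N3 * t))\<^sup>2
    = calderon_weight N1 N2 N3 x y z * (cmod t)\<^sup>2"
proof -
  have "(cmod (complex_of_real x - \<i>) ^ N)\<^sup>2 = (x\<^sup>2 + 1) ^ N" for x N
    by (metis norm_of_real_minus_ii_squared power_mult mult.commute)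
  then show ?thesis
    by (simp add: norm_mult norm_power power_mult_distrib calderon_weight_def)
qed

lemma calderon_sos3_eq_sos3:
  "\<exists>G. \<forall>x y z. calderon N1 N2 N3 (on_torus (sos3 r F N1 N2 N3)) (x, y, z) =
    sos3 r G N1 N2 N3 (of_real x) (of_real y) (of_real z)"
proof -
  have "\<forall>j. \<exists>c. \<forall>x y z. (of_real x - \<i>) ^ N1 * (of_real y - \<i>) ^ N2 * (of_real z - \<i>) ^ N3 *
      poly3 (F j) N1 N2 N3 (cayley x) (cayley y) (cayley z) =
      poly3 c N1 N2 N3 (complex_of_real x) (complex_of_real y) (complex_of_real z)"
    using cayley_poly3_eq_poly3 by blast
  then obtain G where "\<And>j x y z. (of_real x - \<i>) ^ N1 * (of_real y - \<i>) ^ N2 * (of_real z - \<i>) ^ N3 *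
      poly3 (F j) N1 N2 N3 (cayley x) (cayley y) (cayley z) =
      poly3 (G j) N1 N2 N3 (complex_of_real x) (complex_of_real y) (complex_of_real z)"
    by metis
  then show ?thesis
    by (intro exI[of _ G]) (simp add: calderon_on_torus sos3_def sum_distrib_left flip: norm_cayley_weight_squared)
qed

lemma sos3_eq_calderon_sos3:
  "\<exists>F. \<forall>x y z. sos3 r G N1 N2 N3 (of_real x) (of_real y) (of_real z) =
    calderon N1 N2 N3 (on_torus (sos3 r F N1 N2 N3)) (x, y, z)"
proof -
  have "\<forall>j. \<exists>c. \<forall>x y z. poly3 (G j) N1 N2 N3 (complex_of_real x) (complex_of_real y) (complex_of_real z) =
      (of_real x - \<i>) ^ N1 * (of_real y - \<i>) ^ N2 * (of_real z - \<i>) ^ N3 *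
      poly3 c N1 N2 N3 (cayley x) (cayley y) (cayley z)"
    using poly3_eq_cayley_poly3 by blast
  then obtain F where "\<And>j x y z. poly3 (G j) N1 N2 N3 (complex_of_real x) (complex_of_real y) (complex_of_real z) =
      (of_real x - \<i>) ^ N1 * (of_real y - \<i>) ^ N2 * (of_real z - \<i>) ^ N3 *
      poly3 (F j) N1 N2 N3 (cayley x) (cayley y) (cayley z)"
    by metis
  then show ?thesis
    by (intro exI[of _ F]) (simp add: calderon_on_torus sos3_def sum_distrib_left norm_cayley_weight_squared)
qed

lemma sos3_zero_extend:
  assumes "d1 \<le> e1" "d2 \<le> e2" "d3 \<le> e3"
  shows "\<exists>G. \<forall>u v w. sos3 r F d1 d2 d3 u v w = sos3 r G e1 e2 e3 u v w"
  using assms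
  by (intro exI[of _ "\<lambda>j (k, l, m). if k \<le> d1 \<and> l \<le> d2 \<and> m \<le> d3 then F j (k, l, m) else 0"])
    (simp add: sos3_def sum3_zero_extend)

lemma calderon_Q_trig:
  assumes "f \<in> Q_trig N1 N2 N3"
  shows "calderon N1 N2 N3 f \<in> Q_P (2*N1) (2*N2) (2*N3)"
proof -
  obtain r F where f: "f = on_torus (sos3 r F N1 N2 N3)" and fs: "f \<in> sigma_trig N1 N2 N3"
    using assms unfolding Q_trig_iff_sos3 by blast
  obtain G where "\<And>x y z. calderon N1 N2 N3 f (x, y, z) = sos3 r G N1 N2 N3 (of_real x) (of_real y) (of_real z)"
    using calderon_sos3_eq_sos3 f by blast
  moreover obtain G' where "\<And>u v w. sos3 r G N1 N2 N3 u v w = sos3 r G' (N1 + N2 + N3) (N1 + N2 + N3) (N1 + N2 + N3) u v w"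
    using sos3_zero_extend[of N1 "N1 + N2 + N3" N2 "N1 + N2 + N3" N3 "N1 + N2 + N3" r G] by auto
  ultimately show ?thesis
    using calderon_sigma_trig[OF fs] unfolding Q_P_iff_sos3 by metis
qed

lemma poly_eq_0_if_vanishes_on_reals:
  fixes p :: "complex poly"
  assumes "\<And>x::real. poly p (of_real x) = 0"
  shows "p = 0"
proof (rule ccontr)
  assume "p \<noteq> 0"
  then have "finite {z. poly p z = 0}" by (rule poly_roots_finite)
  moreover have "range complex_of_real \<subseteq> {z. poly p z = 0}" using assms by auto
  ultimately have "finite (range complex_of_real)" by (rule finite_subset[rotated])
  then have "finite (UNIV :: real set)" using finite_imageD inj_of_real by blast
  then show False using infinite_UNIV_char_0 by blast
qed

lemma coeff_eq_0_if_vanishes_on_reals: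
  fixes c :: "nat \<Rightarrow> complex"
  assumes "\<And>x::real. (\<Sum>k\<le>d. c k * of_real x ^ k) = 0" and "k \<le> d"
  shows "c k = 0"
proof -
  have "(\<Sum>k\<le>d. monom (c k) k) = 0"
    by (rule poly_eq_0_if_vanishes_on_reals) (simp add: poly_sum poly_monom assms(1))
  then have "coeff (\<Sum>k\<le>d. monom (c k) k) k = 0" by simp
  then show ?thesis using assms(2) by (simp add: coeff_sum)
qed

lemma coeff2_eq_0_if_vanishes_on_reals:
  fixes c :: "nat \<Rightarrow> nat \<Rightarrow> complex"
  assumes "\<And>y z::real. (\<Sum>l\<le>d2. \<Sum>m\<le>d3. c l m * (of_real y ^ l * of_real z ^ m)) = 0"
    and "l \<le> d2" "m \<le> d3"
  shows "c l m = 0"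
proof -
  have "(\<Sum>l\<le>d2. (\<Sum>m\<le>d3. c l m * of_real z ^ m) * of_real y ^ l) =
      (\<Sum>l\<le>d2. \<Sum>m\<le>d3. c l m * (of_real y ^ l * of_real z ^ m))" for y z :: real
    by (simp add: sum_distrib_left sum_distrib_right mult_ac)
  then have "(\<Sum>m\<le>d3. c l m * of_real z ^ m) = 0" for z :: real
    using coeff_eq_0_if_vanishes_on_reals[OF _ assms(2), of "\<lambda>l. \<Sum>m\<le>d3. c l m * of_real z ^ m"] assms(1)
    by simp
  then show ?thesis by (rule coeff_eq_0_if_vanishes_on_reals[OF _ assms(3)])
qed

lemma coeff_mult_cnj_double:
  fixes P :: "complex poly"
  assumes "degree P \<le> d"
  shows "coeff (P * map_poly cnj P) (2 * d) = (if degree P = d then of_real ((cmod (lead_coeff P))\<^sup>2) else 0)"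
proof (cases "degree P = d")
  case True
  then show ?thesis
    using coeff_mult_degree_sum[of P "map_poly cnj P"]
    by (simp add: degree_map_poly coeff_map_poly complex_norm_square mult_2 del: of_real_power)
next
  case False
  then have "degree (P * map_poly cnj P) < 2 * d"
    using degree_mult_le[of P "map_poly cnj P"] assms by (simp add: degree_map_poly)
  then show ?thesis using False by (simp add: coeff_eq_0)
qed

text \<open>The top coefficients of the \<open>P j * cnj P j\<close> of maximal degree are squared moduli,
  so they cannot cancel in the sum.\<close>
lemma degree_le_if_sum_of_squares:
  fixes P :: "nat \<Rightarrow> complex poly" and A :: "complex poly"
  assumes "degree A \<le> 2 * M"
    and "\<And>x::real. poly A (of_real x) = of_real (\<Sum>j<r. (cmod (poly (P j) (of_real x)))\<^sup>2)"
    and "j < r"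
  shows "degree (P j) \<le> M"
proof -
  define d where "d = Max ((\<lambda>j. degree (P j)) ` {..<r})"
  have deg_le: "degree (P i) \<le> d" if "i < r" for i
    unfolding d_def using that by (intro Max_ge) auto
  have "d \<in> (\<lambda>j. degree (P j)) ` {..<r}"
    unfolding d_def using assms(3) by (intro Max_in) auto
  then obtain j0 where j0: "j0 < r" "degree (P j0) = d" by auto
  define Q where "Q = (\<Sum>i<r. P i * map_poly cnj (P i))"
  have "poly Q (of_real x) = poly A (of_real x)" for x :: real
    unfolding Q_def assms(2)
    by (simp add: poly_sum complex_norm_square[symmetric] del: of_real_power)
  then have "Q = A"
    using poly_eq_0_if_vanishes_on_reals[of "Q - A"] by simp
  have "d \<le> M"
  proof (rule ccontr)
    assume "\<not> d \<le> M"
    then have "P j0 \<noteq> 0" using j0(2) by auto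
    then have "0 < (\<Sum>i<r. if degree (P i) = d then (cmod (lead_coeff (P i)))\<^sup>2 else 0)"
      using j0 by (intro sum_pos2[of _ j0]) auto
    moreover have "coeff Q (2 * d) = of_real (\<Sum>i<r. if degree (P i) = d then (cmod (lead_coeff (P i)))\<^sup>2 else 0)"
      unfolding Q_def coeff_sum of_real_sum by (intro sum.cong refl) (simp add: coeff_mult_cnj_double deg_le)
    ultimately have "coeff Q (2 * d) \<noteq> 0"
      by (simp only: of_real_eq_0_iff)
    then have "2 * d \<le> degree A"
      unfolding \<open>Q = A\<close> by (rule le_degree)
    with assms(1) \<open>\<not> d \<le> M\<close> show False by linarith
  qed
  then show ?thesis
    using deg_le[OF assms(3)] by linarith
qed

lemma sos3_coeff_eq_0_first:
  assumes eq: "\<And>x y z. sos3 r F d1 d2 d3 (of_real x) (of_real y) (of_real z) = poly3 a (2 * M) e2 e3 x y z"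
    and "j < r" "M < k" "k \<le> d1" "l \<le> d2" "m \<le> d3"
  shows "F j (k, l, m) = 0"
proof -
  have "(\<Sum>l\<le>d2. \<Sum>m\<le>d3. F j (k, l, m) * (of_real y ^ l * of_real z ^ m)) = 0" for y z :: real
  proof -
    define P where "P j = (\<Sum>k\<le>d1. monom (\<Sum>l\<le>d2. \<Sum>m\<le>d3. F j (k, l, m) * (of_real y ^ l * of_real z ^ m)) k)" for j
    define A where "A = (\<Sum>k\<le>2 * M. monom (\<Sum>l\<le>e2. \<Sum>m\<le>e3. complex_of_real (a (k, l, m)) * (of_real y ^ l * of_real z ^ m)) k)"
    have "degree A \<le> 2 * M"
      unfolding A_def by (intro degree_sum_le) (auto intro: order_trans[OF degree_monom_le])
    moreover have "poly A (of_real x) = of_real (\<Sum>j<r. (cmod (poly (P j) (of_real x)))\<^sup>2)" for x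
    proof -
      have "poly A (of_real x) = of_real (poly3 a (2 * M) e2 e3 x y z)"
        unfolding of_real_poly3 unfolding A_def poly3_eq_poly_first ..
      also have "\<dots> = of_real (\<Sum>j<r. (cmod (poly (P j) (of_real x)))\<^sup>2)"
        unfolding eq[symmetric] unfolding sos3_def P_def poly3_eq_poly_first ..
      finally show ?thesis .
    qed
    ultimately have "degree (P j) \<le> M"
      using degree_le_if_sum_of_squares \<open>j < r\<close> by blast
    then have "coeff (P j) k = 0"
      using \<open>M < k\<close> by (intro coeff_eq_0) simp
    then show ?thesis
      using \<open>k \<le> d1\<close> by (simp add: P_def coeff_sum)
  qed
  then show ?thesis
    using coeff2_eq_0_if_vanishes_on_reals[where c="\<lambda>l m. F j (k, l, m)"] assms(5,6) by blast
qed

lemma sos3_coeff_eq_0: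
  assumes eq: "\<And>x y z. sos3 r F D D D (of_real x) (of_real y) (of_real z) = poly3 a (2*N1) (2*N2) (2*N3) x y z"
    and "j < r" "k \<le> D" "l \<le> D" "m \<le> D" and "N1 < k \<or> N2 < l \<or> N3 < m"
  shows "F j (k, l, m) = 0"
  using assms(6)
proof (elim disjE)
  assume "N1 < k"
  then show ?thesis using sos3_coeff_eq_0_first[OF eq] assms(2-5) by blast
next
  assume "N2 < l"
  have "sos3 r (\<lambda>j (l, k, m). F j (k, l, m)) D D D (of_real y) (of_real x) (of_real z) =
      poly3 (\<lambda>(l, k, m). a (k, l, m)) (2*N2) (2*N1) (2*N3) y x z" for x y z
    using eq[of x y z] unfolding sos3_swap12[of r F] poly3_swap12[of a] .
  from sos3_coeff_eq_0_first[OF this] show ?thesis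
    using \<open>N2 < l\<close> assms(2-5) by fastforce
next
  assume "N3 < m"
  have "sos3 r (\<lambda>j (m, l, k). F j (k, l, m)) D D D (of_real z) (of_real y) (of_real x) =
      poly3 (\<lambda>(m, l, k). a (k, l, m)) (2*N3) (2*N2) (2*N1) z y x" for x y z
    using eq[of x y z] unfolding sos3_swap13[of r F] poly3_swap13[of a] .
  from sos3_coeff_eq_0_first[OF this] show ?thesis
    using \<open>N3 < m\<close> assms(2-5) by fastforce
qed

lemma sos3_reduce_degree:
  assumes "\<And>x y z. sos3 r F D D D (of_real x) (of_real y) (of_real z) = poly3 a (2*N1) (2*N2) (2*N3) x y z"
  shows "\<exists>G. \<forall>u v w. sos3 r F D D D u v w = sos3 r G N1 N2 N3 u v w"
proof -
  define E where "E = D + N1 + N2 + N3"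
  define F' where "F' j = (\<lambda>(k, l, m). if k \<le> D \<and> l \<le> D \<and> m \<le> D then F j (k, l, m) else 0)" for j
  have "poly3 (F j) D D D u v w = poly3 (F' j) N1 N2 N3 u v w" if "j < r" for j u v w
  proof -
    have "poly3 (F j) D D D u v w = poly3 (F' j) E E E u v w"
      unfolding F'_def E_def by (rule sum3_zero_extend[symmetric]) auto
    also have "\<dots> = poly3 (F' j) N1 N2 N3 u v w"
      by (rule sum3_shrink_box) (auto simp: E_def F'_def sos3_coeff_eq_0[OF assms that])
    finally show ?thesis .
  qed
  then show ?thesis
    unfolding sos3_def by (intro exI[of _ F'] allI sum.cong) auto
qed

lemma Q_P_in_calderon_image:
  assumes p: "p \<in> Q_P (2*N1) (2*N2) (2*N3)"
  shows "p \<in> calderon N1 N2 N3 ` Q_trig N1 N2 N3"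
proof -
  obtain r D F where ps: "p \<in> sigma_P (2*N1) (2*N2) (2*N3)"
    and pF: "\<And>x y z. p (x, y, z) = sos3 r F D D D (of_real x) (of_real y) (of_real z)"
    using p unfolding Q_P_iff_sos3 by blast
  moreover obtain a where "\<And>x y z. p (x, y, z) = poly3 a (2*N1) (2*N2) (2*N3) x y z"
    using ps unfolding sigma_P_def real_poly3_iff_poly3 by blast
  ultimately obtain F' where "\<And>x y z. p (x, y, z) = sos3 r F' N1 N2 N3 (of_real x) (of_real y) (of_real z)"
    using sos3_reduce_degree[of r F D a N1 N2 N3] by auto
  then obtain G where "\<And>x y z. p (x, y, z) = calderon N1 N2 N3 (on_torus (sos3 r G N1 N2 N3)) (x, y, z)"
    using sos3_eq_calderon_sos3[of r F' N1 N2 N3] by auto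
  then have calderon_f: "calderon N1 N2 N3 (on_torus (sos3 r G N1 N2 N3)) = p"
    by (auto simp: fun_eq_iff)
  obtain g where g: "g \<in> sigma_trig N1 N2 N3" "calderon N1 N2 N3 g = p"
    using sigma_P_in_calderon_image[OF ps] by blast
  have "trig_poly N1 N2 N3 g"
    using g(1) by (simp add: sigma_trig_def)
  then obtain H where H: "sep_isCont_at_1 H" "g = on_torus H"
    by (rule trig_poly_on_torus)
  have "on_torus (sos3 r G N1 N2 N3) = g"
    unfolding H(2) by (rule on_torus_eqI[OF sep_isCont_at_1_sos3 H(1), of N1 N2 N3]) (use calderon_f g(2) H(2) in simp)
  then have "on_torus (sos3 r G N1 N2 N3) \<in> Q_trig N1 N2 N3"
    using g(1) unfolding Q_trig_iff_sos3 by blast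
  then show ?thesis
    using calderon_f by blast
qed

lemma calderon_image_Q_trig: "calderon N1 N2 N3 ` Q_trig N1 N2 N3 = Q_P (2*N1) (2*N2) (2*N3)"
  using calderon_Q_trig Q_P_in_calderon_image by blast

section \<open>Transfer of extremal points and faces\<close>

locale linear_embedding =
  fixes C :: "fn3 \<Rightarrow> fn3" and T :: "fn3 set"
  assumes linear: "\<And>f g s t. C (\<lambda>p. s * f p + t * g p) = (\<lambda>p. s * C f p + t * C g p)"
    and subspace: "\<And>f g s t. f \<in> T \<Longrightarrow> g \<in> T \<Longrightarrow> (\<lambda>p. s * f p + t * g p) \<in> T"
    and inj: "inj_on C T"
begin

lemma map_add: "C (\<lambda>p. f p + g p) = (\<lambda>p. C f p + C g p)"
  using linear[of 1 f 1 g] by simp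

lemma map_scale: "C (\<lambda>p. c * f p) = (\<lambda>p. c * C f p)"
  using linear[of c f 0 f] by simp

lemma map_comb3: "C (comb3 g h t) = comb3 (C g) (C h) t"
  unfolding comb3_def using linear[of "1 - t" g t h] by simp

lemma subspace_add: "f \<in> T \<Longrightarrow> g \<in> T \<Longrightarrow> (\<lambda>p. f p + g p) \<in> T"
  using subspace[of f g 1 1] by simp

lemma subspace_scale: "f \<in> T \<Longrightarrow> (\<lambda>p. c * f p) \<in> T"
  using subspace[of f f c 0] by simp

lemma subspace_comb3: "g \<in> T \<Longrightarrow> h \<in> T \<Longrightarrow> comb3 g h t \<in> T"
  unfolding comb3_def by (rule subspace)

lemma extremal_point_image_iff:
  assumes "U \<subseteq> T" and "f \<in> U"
  shows "extremal_point (C ` U) (C f) \<longleftrightarrow> extremal_point U f"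
proof -
  have "f \<in> T" using assms by blast
  have sum_iff: "C f = (\<lambda>p. C g p + C h p) \<longleftrightarrow> f = (\<lambda>p. g p + h p)" if "g \<in> U" "h \<in> U" for g h
    using inj_on_eq_iff[OF inj \<open>f \<in> T\<close> subspace_add] that assms(1) by (auto simp flip: map_add)
  have scale_iff: "C g = (\<lambda>p. c * C f p) \<longleftrightarrow> g = (\<lambda>p. c * f p)" if "g \<in> U" for g c
    using inj_on_eq_iff[OF inj _ subspace_scale[OF \<open>f \<in> T\<close>]] that assms(1) by (auto simp flip: map_scale)
  have "extremal_point (C ` U) (C f) \<longleftrightarrow> (\<forall>g\<in>U. \<forall>h\<in>U. C f = (\<lambda>p. C g p + C h p) \<longrightarrow>
      (\<exists>c\<ge>0. C g = (\<lambda>p. c * C f p)) \<and> (\<exists>d\<ge>0. C h = (\<lambda>p. d * C f p)))"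
    unfolding extremal_point_def using assms(2) by simp
  also have "\<dots> \<longleftrightarrow> (\<forall>g\<in>U. \<forall>h\<in>U. f = (\<lambda>p. g p + h p) \<longrightarrow>
      (\<exists>c\<ge>0. g = (\<lambda>p. c * f p)) \<and> (\<exists>d\<ge>0. h = (\<lambda>p. d * f p)))"
    by (intro ball_cong refl) (simp only: sum_iff scale_iff)
  also have "\<dots> \<longleftrightarrow> extremal_point U f"
    unfolding extremal_point_def using assms(2) by simp
  finally show ?thesis .
qed

lemma image_extremal_points:
  assumes "U \<subseteq> T"
  shows "C ` {f. extremal_point U f} = {g. extremal_point (C ` U) g}"
proof (intro set_eqI iffI)
  fix g assume "g \<in> C ` {f. extremal_point U f}"
  then obtain f where "extremal_point U f" "g = C f" by blast
  moreover have "f \<in> U" using \<open>extremal_point U f\<close> by (simp add: extremal_point_def)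
  ultimately show "g \<in> {g. extremal_point (C ` U) g}"
    using extremal_point_image_iff[OF assms] by simp
next
  fix g assume "g \<in> {g. extremal_point (C ` U) g}"
  then have "extremal_point (C ` U) g" by simp
  moreover from this obtain f where "f \<in> U" "g = C f" by (auto simp: extremal_point_def)
  ultimately show "g \<in> C ` {f. extremal_point U f}"
    using extremal_point_image_iff[OF assms] by blast
qed

lemma comb3_mem_image_iff:
  assumes "g \<in> T" "h \<in> T" "X \<subseteq> T"
  shows "comb3 (C g) (C h) t \<in> C ` X \<longleftrightarrow> comb3 g h t \<in> X"
  using inj_on_image_mem_iff[OF inj subspace_comb3[OF assms(1,2)] assms(3)] by (simp add: map_comb3)

lemma extremal_face_image_iff:
  assumes "U \<subseteq> T" and "D \<subseteq> U"
  shows "extremal_face (C ` U) (C ` D) \<longleftrightarrow> extremal_face U D"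
proof -
  have in_U: "comb3 (C g) (C h) t \<in> C ` U \<longleftrightarrow> comb3 g h t \<in> U"
    and in_D: "comb3 (C g) (C h) t \<in> C ` D \<longleftrightarrow> comb3 g h t \<in> D" if "g \<in> U" "h \<in> U" for g h t
    using comb3_mem_image_iff[of g h U t] comb3_mem_image_iff[of g h D t] that assms by auto
  have A: "(\<forall>g\<in>C ` D. \<forall>h\<in>C ` D. \<forall>t\<in>{0..1}. comb3 g h t \<in> C ` D) \<longleftrightarrow>
      (\<forall>g\<in>D. \<forall>h\<in>D. \<forall>t\<in>{0..1}. comb3 g h t \<in> D)"
    using assms(2) by (simp add: in_D subset_iff)
  have B: "(\<forall>g\<in>C ` U. \<forall>h\<in>C ` U. (\<forall>s\<in>{0..1}. comb3 g h s \<in> C ` U) \<longrightarrow>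
        (\<forall>t. 0 < t \<and> t < 1 \<and> comb3 g h t \<in> C ` D \<longrightarrow> (\<forall>s\<in>{0..1}. comb3 g h s \<in> C ` D))) \<longleftrightarrow>
      (\<forall>g\<in>U. \<forall>h\<in>U. (\<forall>s\<in>{0..1}. comb3 g h s \<in> U) \<longrightarrow>
        (\<forall>t. 0 < t \<and> t < 1 \<and> comb3 g h t \<in> D \<longrightarrow> (\<forall>s\<in>{0..1}. comb3 g h s \<in> D)))"
    by (simp add: in_U in_D)
  show ?thesis
    unfolding extremal_face_def using A B image_mono[OF assms(2), of C] assms(2) by blast
qed

lemma image_extremal_faces:
  assumes "U \<subseteq> T"
  shows "(\<lambda>D. C ` D) ` {D. extremal_face U D} = {E. extremal_face (C ` U) E}"
proof (intro set_eqI iffI)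
  fix E assume "E \<in> (\<lambda>D. C ` D) ` {D. extremal_face U D}"
  then show "E \<in> {E. extremal_face (C ` U) E}"
    using extremal_face_image_iff[OF assms] by (auto simp: extremal_face_def[of U])
next
  fix E assume "E \<in> {E. extremal_face (C ` U) E}"
  then have E: "extremal_face (C ` U) E" by simp
  define D where "D = {f \<in> U. C f \<in> E}"
  have "E \<subseteq> C ` U" using E by (simp add: extremal_face_def)
  then have "E = C ` D" by (auto simp: D_def)
  moreover have "D \<subseteq> U" by (auto simp: D_def)
  ultimately show "E \<in> (\<lambda>D. C ` D) ` {D. extremal_face U D}"
    using E extremal_face_image_iff[OF assms] by blast
qed

end

lemma linear_embedding_calderon: "linear_embedding (calderon N1 N2 N3) (Collect (trig_poly N1 N2 N3))"
  by unfold_locales (simp_all add: calderon_linear trig_poly_linear calderon_inj_on_trig_poly)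

theorem corollary8:
  fixes N1 N2 N3 :: nat
  shows "calderon N1 N2 N3 ` {f. extremal_point (sigma_trig N1 N2 N3) f}
           = {g. extremal_point (sigma_P (2*N1) (2*N2) (2*N3)) g}
    \<and> (\<lambda>D. calderon N1 N2 N3 ` D) ` {D. extremal_face (sigma_trig N1 N2 N3) D}
           = {E. extremal_face (sigma_P (2*N1) (2*N2) (2*N3)) E}
    \<and> calderon N1 N2 N3 ` {f. extremal_point (Q_trig N1 N2 N3) f}
           = {g. extremal_point (Q_P (2*N1) (2*N2) (2*N3)) g}
    \<and> (\<lambda>D. calderon N1 N2 N3 ` D) ` {D. extremal_face (Q_trig N1 N2 N3) D}
           = {E. extremal_face (Q_P (2*N1) (2*N2) (2*N3)) E}"
proof -
  interpret linear_embedding "calderon N1 N2 N3" "Collect (trig_poly N1 N2 N3)"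
    by (rule linear_embedding_calderon)
  have sigma: "sigma_trig N1 N2 N3 \<subseteq> Collect (trig_poly N1 N2 N3)"
    by (auto simp: sigma_trig_def)
  moreover have "Q_trig N1 N2 N3 \<subseteq> Collect (trig_poly N1 N2 N3)"
    using sigma by (auto simp: Q_trig_def)
  ultimately show ?thesis
    using image_extremal_points image_extremal_faces
    by (simp add: calderon_image_sigma_trig calderon_image_Q_trig)
qed

end
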